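(* Suppose Assumptions (A1), (A2), (A3) and (SC) hold. Then for every $i\in\{1,\dots,k\}$, $\frac{t}{-h_i(x,y_t^*(x))}\to\lambda_i(x)$ as $t\to0^+$, uniformly in $x\in\mathcal{X}$; that is, for every $\epsilon>0$ there is $T>0$ such that $\big|\lambda_i(x)-\frac{t}{-h_i(x,y_t^*(x))}\big|\le\epsilon$ for all $x\in\mathcal{X}$ and $0<t\le T$.
   Context: Let $f,g,h_1,\dots,h_k:\mathbb{R}^n\times\mathbb{R}^m\to\mathbb{R}$ and $\mathcal{X}\subseteq\mathbb{R}^n$. For $x\in\mathcal{X}$ let $\mathcal{Y}(x)=\{y: h_i(x,y)\le 0,\ i=1,\dots,k\}$ and $y^*(x)=\arg\min_{y\in\mathcal{Y}(x)} g(x,y)$ (a singleton under (SC)). For $t>0$ let $\widetilde g_t(x,y)=g(x,y)-t\sum_{i=1}^k\log(-h_i(x,y))$ and $y_t^*(x)=\arg\min_y\widetilde g_t(x,y)$. $\lambda_i(x)\ge0$ denotes the optimal KKT multiplier of the $i$-th constraint at $y^*(x)$. Assumptions: (A1) $f$ once and $g,h_i$ twice continuously differentiable; (A2) $\mathcal{X}$ convex and compact and for every $x\in\mathcal{X}$ there is $y$ with $h_i(x,y)<0$ for all $i$; (A3) (LICQ) for every $x\in\mathcal{X}$ and $y\in y^*(x)$, $\{\nabla_y h_i(x,y): h_i(x,y)=0\}$ is linearly independent; (SC) for every $x\in\mathcal{X}$, $g(x,\cdot)$ is $\mu_g$-strongly convex and each $h_i(x,\cdot)$ convex. *)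

theory Defs
  imports "HOL-Analysis.Analysis"
begin

definition C1_fun :: "('a::real_normed_vector \<Rightarrow> real) \<Rightarrow> bool" where
  "C1_fun F \<longleftrightarrow> (\<exists>F'. (\<forall>z. (F has_derivative blinfun_apply (F' z)) (at z))
                      \<and> continuous_on UNIV F')"

definition C2_fun :: "('a::real_normed_vector \<Rightarrow> real) \<Rightarrow> bool" where
  "C2_fun F \<longleftrightarrow> (\<exists>F' F''. (\<forall>z. (F has_derivative blinfun_apply (F' z)) (at z))
                      \<and> (\<forall>z. (F' has_derivative blinfun_apply (F'' z)) (at z))
                      \<and> continuous_on UNIV F'')"

definition strongly_convex_on :: "'a::real_normed_vector set \<Rightarrow> real \<Rightarrow> ('a \<Rightarrow> real) \<Rightarrow> bool" where
  "strongly_convex_on S \<mu> \<phi> \<longleftrightarrow>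
     (\<forall>a\<in>S. \<forall>b\<in>S. \<forall>\<theta>::real. 0 \<le> \<theta> \<and> \<theta> \<le> 1 \<longrightarrow>
        \<phi> (\<theta> *\<^sub>R a + (1 - \<theta>) *\<^sub>R b)
          \<le> \<theta> * \<phi> a + (1 - \<theta>) * \<phi> b - \<mu> / 2 * \<theta> * (1 - \<theta>) * (norm (a - b))\<^sup>2)"

text \<open>Constraints are indexed by i < k (i.e. 0..k-1 instead of 1..k).\<close>

definition feas ::
  "(nat \<Rightarrow> 'x \<Rightarrow> 'y \<Rightarrow> real) \<Rightarrow> nat \<Rightarrow> 'x \<Rightarrow> 'y set" where
  "feas h k x = {y. \<forall>i<k. h i x y \<le> 0}"

definition ystar ::
  "('x \<Rightarrow> 'y \<Rightarrow> real) \<Rightarrow> (nat \<Rightarrow> 'x \<Rightarrow> 'y \<Rightarrow> real) \<Rightarrow> nat \<Rightarrow> 'x \<Rightarrow> 'y" where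
  "ystar g h k x = (THE y. y \<in> feas h k x \<and> (\<forall>z\<in>feas h k x. g x y \<le> g x z))"

definition gbar ::
  "('x \<Rightarrow> 'y \<Rightarrow> real) \<Rightarrow> (nat \<Rightarrow> 'x \<Rightarrow> 'y \<Rightarrow> real) \<Rightarrow> nat \<Rightarrow> real \<Rightarrow> 'x \<Rightarrow> 'y \<Rightarrow> real" where
  "gbar g h k t x y = g x y - t * (\<Sum>i<k. ln (- h i x y))"

definition ybar ::
  "('x \<Rightarrow> 'y \<Rightarrow> real) \<Rightarrow> (nat \<Rightarrow> 'x \<Rightarrow> 'y \<Rightarrow> real) \<Rightarrow> nat \<Rightarrow> real \<Rightarrow> 'x \<Rightarrow> 'y" where
  "ybar g h k t x = (THE y. (\<forall>i<k. h i x y < 0) \<and>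
       (\<forall>z. (\<forall>i<k. h i x z < 0) \<longrightarrow> gbar g h k t x y \<le> gbar g h k t x z))"

definition grad_y :: "('x \<Rightarrow> 'y::real_inner \<Rightarrow> real) \<Rightarrow> 'x \<Rightarrow> 'y \<Rightarrow> 'y" where
  "grad_y F x y = (THE D. ((\<lambda>v. F x v) has_derivative (\<lambda>w. D \<bullet> w)) (at y))"

definition is_KKT_mult ::
  "('x \<Rightarrow> 'y::real_inner \<Rightarrow> real) \<Rightarrow> (nat \<Rightarrow> 'x \<Rightarrow> 'y \<Rightarrow> real) \<Rightarrow> nat \<Rightarrow> 'x \<Rightarrow> (nat \<Rightarrow> real) \<Rightarrow> bool" where
  "is_KKT_mult g h k x lam \<longleftrightarrow>
     (\<forall>i<k. 0 \<le> lam i \<and> lam i * h i x (ystar g h k x) = 0) \<and> (\<forall>i\<ge>k. lam i = 0) \<and>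
     grad_y g x (ystar g h k x) + (\<Sum>i<k. lam i *\<^sub>R grad_y (h i) x (ystar g h k x)) = 0"

definition lambda ::
  "('x \<Rightarrow> 'y::real_inner \<Rightarrow> real) \<Rightarrow> (nat \<Rightarrow> 'x \<Rightarrow> 'y \<Rightarrow> real) \<Rightarrow> nat \<Rightarrow> 'x \<Rightarrow> nat \<Rightarrow> real" where
  "lambda g h k x = (THE lam. is_KKT_mult g h k x lam)"

end

theory Submission
  imports Defs
begin

(* For t > 0 the barrier function is strongly convex on the strictly feasible set and blows up
   at its boundary, so it has a unique minimiser y_t(x); its stationarity condition says that the
   numbers t / (-h_i(x, y_t(x))) are Lagrange multipliers. The barrier gap estimate
   mu/2 |z - y_t(x)|^2 <= g(x,z) - g(x,y_t(x)) + k t  (z feasible) shows that along sequences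
   x_n -> x_0 in X, t_n -> 0 the minimisers y_{t_n}(x_n) can only accumulate at y*(x_0). There, by
   LICQ, the barrier multipliers stay bounded and their limit points satisfy the KKT conditions,
   whose multipliers are unique, again by LICQ. Hence the barrier multipliers converge to
   lambda(x_0) along such sequences, and compactness of X turns this into uniform convergence. *)

section \<open>Partial gradients and limits\<close>

lemma linear_functional_eq_inner:
  fixes L :: "'b::euclidean_space \<Rightarrow> real"
  assumes "linear L"
  shows "L w = (\<Sum>b\<in>Basis. L b *\<^sub>R b) \<bullet> w"
proof -
  have "L w = L (\<Sum>b\<in>Basis. (w \<bullet> b) *\<^sub>R b)" by (simp add: euclidean_representation)
  also have "\<dots> = (\<Sum>b\<in>Basis. (w \<bullet> b) * L b)"
    using assms by (simp add: linear_sum linear_scale)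
  also have "\<dots> = (\<Sum>b\<in>Basis. L b *\<^sub>R b) \<bullet> w"
    by (simp add: inner_sum_right inner_commute mult.commute)
  finally show ?thesis .
qed

lemma grad_y_eqI:
  assumes "(F x has_derivative (\<lambda>w. D \<bullet> w)) (at y)"
  shows "grad_y F x y = D"
  unfolding grad_y_def
proof (rule the_equality)
  fix D' assume "(F x has_derivative (\<lambda>w. D' \<bullet> w)) (at y)"
  from has_derivative_unique[OF this assms] have "D' \<bullet> (D' - D) = D \<bullet> (D' - D)" by metis
  then have "(D' - D) \<bullet> (D' - D) = 0" by (simp add: inner_diff_left)
  then show "D' = D" by simp
qed (use assms in simp)

lemma C2_fun_imp_C1_fun:
  assumes "C2_fun F"
  shows "C1_fun F"
proof -
  obtain F' F'' where F': "\<And>z. (F has_derivative blinfun_apply (F' z)) (at z)"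
    and F'': "\<And>z. (F' has_derivative blinfun_apply (F'' z)) (at z)"
    using assms unfolding C2_fun_def by blast
  have "continuous_on UNIV F'"
    by (rule has_derivative_continuous_on[of UNIV F' "\<lambda>z. blinfun_apply (F'' z)"]) (simp add: F'')
  then show ?thesis
    unfolding C1_fun_def by (intro exI[of _ F']) (simp add: F')
qed

lemma C1_fun_grad_y:
  fixes F :: "'a::real_normed_vector \<Rightarrow> 'b::euclidean_space \<Rightarrow> real"
  assumes "C1_fun (case_prod F)"
  shows "(F x has_derivative (\<lambda>w. grad_y F x y \<bullet> w)) (at y)"
    and "continuous_on UNIV (case_prod (grad_y F))"
    and "continuous_on UNIV (case_prod F)"
proof -
  obtain F' where F': "\<And>z. (case_prod F has_derivative blinfun_apply (F' z)) (at z)"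
    and F'_cont: "continuous_on UNIV F'"
    using assms unfolding C1_fun_def by blast
  define G where "G x y = (\<Sum>b\<in>Basis. F' (x, y) (0, b) *\<^sub>R b)" for x y
  have G: "(F x has_derivative (\<lambda>w. G x y \<bullet> w)) (at y)" for x y
  proof -
    have "((\<lambda>v. case_prod F (x, v)) has_derivative (\<lambda>w. F' (x, y) (0, w))) (at y)"
      by (rule has_derivative_compose[OF _ F']) (auto intro!: derivative_eq_intros)
    moreover have "linear (\<lambda>w. F' (x, y) (0, w))"
      by (rule bounded_linear.linear[OF bounded_linear_compose[OF blinfun.bounded_linear_right
            bounded_linear_Pair[OF bounded_linear_zero bounded_linear_ident]]])
    then have "F' (x, y) (0, w) = G x y \<bullet> w" for w
      unfolding G_def by (rule linear_functional_eq_inner)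
    ultimately show ?thesis by simp
  qed
  have grad: "grad_y F = G" by (intro ext grad_y_eqI G)
  show "(F x has_derivative (\<lambda>w. grad_y F x y \<bullet> w)) (at y)" unfolding grad by (rule G)
  have "continuous_on UNIV (\<lambda>z. \<Sum>b\<in>Basis. F' z (0, b) *\<^sub>R b)"
    by (intro continuous_intros F'_cont)
  then show "continuous_on UNIV (case_prod (grad_y F))"
    unfolding grad G_def by (simp add: case_prod_beta')
  show "continuous_on UNIV (case_prod F)"
    by (rule has_derivative_continuous_on[of UNIV _ "\<lambda>z. blinfun_apply (F' z)"]) (simp add: F')
qed

lemma tendsto_case_prod_continuous:
  assumes "continuous_on UNIV (case_prod F)" "(a \<longlongrightarrow> a0) G" "(b \<longlongrightarrow> b0) G"
  shows "((\<lambda>n. F (a n) (b n)) \<longlongrightarrow> F a0 b0) G"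
  using continuous_on_tendsto_compose[OF assms(1) tendsto_Pair[OF assms(2,3)]] by simp

lemma continuous_on_case_prod_slice:
  assumes "continuous_on UNIV (case_prod F)"
  shows "continuous_on S (F x)"
proof -
  have "continuous_on S (\<lambda>y. case_prod F (x, y))"
    by (rule continuous_on_compose2[OF assms]) (auto intro!: continuous_intros)
  then show ?thesis by simp
qed

lemma ln_minus_le_of_abs_le:
  fixes a :: real
  assumes "a < 0" "\<bar>a\<bar> \<le> M"
  shows "ln (- a) \<le> M"
proof -
  have "ln (- a) < - a" using assms(1) by (intro ln_less_self) simp
  then show ?thesis using assms(2) abs_ge_minus_self[of a] by linarith
qed

lemma LIMSEQ_zero_if_le_inverse_Suc:
  fixes u :: "nat \<Rightarrow> real"
  assumes "\<And>n. 0 \<le> u n" "\<And>n. u n \<le> inverse (real (Suc n))"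
  shows "u \<longlonglongrightarrow> 0"
proof (rule Lim_null_comparison[OF always_eventually LIMSEQ_inverse_real_of_nat], intro allI)
  show "norm (u n) \<le> inverse (real (Suc n))" for n using assms[of n] by simp
qed

lemma continuous_attains_inf_if_large_outside_compact:
  fixes F :: "'a::topological_space \<Rightarrow> real"
  assumes K: "compact K" "K \<subseteq> U" "y0 \<in> K" "continuous_on K F"
    and large: "\<And>z. z \<in> U \<Longrightarrow> z \<notin> K \<Longrightarrow> F y0 < F z"
  shows "\<exists>y\<in>U. \<forall>z\<in>U. F y \<le> F z"
proof -
  obtain y where y: "y \<in> K" "\<And>z. z \<in> K \<Longrightarrow> F y \<le> F z"
    using continuous_attains_inf[of K F] K by auto
  have "F y \<le> F z" if "z \<in> U" for z
  proof (cases "z \<in> K")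
    case False
    then show ?thesis using y(2)[OF K(3)] large[OF that] by simp
  qed (use y in simp)
  then show ?thesis using y(1) K(2) by blast
qed

lemma eventually_in_compact_convergent_subseq:
  fixes f :: "nat \<Rightarrow> 'a::metric_space"
  assumes "compact K" "\<forall>\<^sub>F n in sequentially. f n \<in> K"
  shows "\<exists>r l. strict_mono r \<and> (f \<circ> r) \<longlonglongrightarrow> l"
proof -
  obtain N where "\<And>n. n \<ge> N \<Longrightarrow> f n \<in> K"
    using assms(2) unfolding eventually_sequentially by blast
  then have "\<forall>n. f (n + N) \<in> K" by simp
  with compact_imp_seq_compact[OF assms(1)]
  obtain l r where r: "strict_mono r" and lim: "((\<lambda>n. f (n + N)) \<circ> r) \<longlonglongrightarrow> l"
    by (rule seq_compactE)
  have "strict_mono (\<lambda>n. r n + N)" using r by (simp add: strict_mono_def)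
  moreover have "(f \<circ> (\<lambda>n. r n + N)) \<longlonglongrightarrow> l" using lim by (simp add: o_def)
  ultimately show ?thesis by blast
qed

lemma bounded_family_convergent_subseq:
  fixes u :: "nat \<Rightarrow> nat \<Rightarrow> real"
  assumes "\<And>n i. i < k \<Longrightarrow> \<bar>u n i\<bar> \<le> B"
  shows "\<exists>r l. strict_mono r \<and> (\<forall>i<k. (\<lambda>n. u (r n) i) \<longlonglongrightarrow> l i)"
  using assms
proof (induction k)
  case 0
  show ?case by (intro exI[of _ id]) (auto simp: strict_mono_def)
next
  case (Suc k)
  then obtain r l where r: "strict_mono r" and l: "\<forall>i<k. (\<lambda>n. u (r n) i) \<longlonglongrightarrow> l i"
    by (metis less_SucI)
  have "bounded (range (\<lambda>n. u (r n) k))"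
    unfolding bounded_iff using Suc.prems[of k] by auto
  then obtain lk r' where r': "strict_mono r'" and lk: "((\<lambda>n. u (r n) k) \<circ> r') \<longlonglongrightarrow> lk"
    using bounded_imp_convergent_subsequence by blast
  have "(\<lambda>n. u ((r \<circ> r') n) i) \<longlonglongrightarrow> (l(k := lk)) i" if "i < Suc k" for i
  proof (cases "i = k")
    case False
    then have "i < k" using that by simp
    from LIMSEQ_subseq_LIMSEQ[OF l[rule_format, OF this] r'] show ?thesis
      using False by (simp add: o_def)
  qed (use lk in \<open>simp add: o_def\<close>)
  then show ?case using strict_mono_o[OF r r'] by blast
qed

section \<open>Strong convexity\<close>

lemma strongly_convex_onD:
  assumes "strongly_convex_on S \<mu> F" "a \<in> S" "b \<in> S" "0 \<le> \<theta>" "\<theta> \<le> 1"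
  shows "F (\<theta> *\<^sub>R a + (1 - \<theta>) *\<^sub>R b)
    \<le> \<theta> * F a + (1 - \<theta>) * F b - \<mu> / 2 * \<theta> * (1 - \<theta>) * (norm (a - b))\<^sup>2"
  using assms unfolding strongly_convex_on_def by blast

lemma convex_on_imp_strongly_convex_on_0: "convex_on S F \<Longrightarrow> strongly_convex_on S 0 F"
  unfolding strongly_convex_on_def convex_on_def by simp

lemma strongly_convex_on_subset:
  "strongly_convex_on T \<mu> F \<Longrightarrow> S \<subseteq> T \<Longrightarrow> strongly_convex_on S \<mu> F"
  unfolding strongly_convex_on_def by blast

lemma strongly_convex_on_add_convex:
  assumes F: "strongly_convex_on S \<mu> F" and G: "convex_on S G"
  shows "strongly_convex_on S \<mu> (\<lambda>y. F y + G y)"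
  unfolding strongly_convex_on_def
proof (intro ballI allI impI)
  fix a b and \<theta> :: real assume ab: "a \<in> S" "b \<in> S" and \<theta>: "0 \<le> \<theta> \<and> \<theta> \<le> 1"
  have "G (\<theta> *\<^sub>R a + (1 - \<theta>) *\<^sub>R b) \<le> \<theta> * G a + (1 - \<theta>) * G b"
    using convex_onD[OF G, of "1 - \<theta>" a b] ab \<theta> by simp
  moreover have "F (\<theta> *\<^sub>R a + (1 - \<theta>) *\<^sub>R b)
      \<le> \<theta> * F a + (1 - \<theta>) * F b - \<mu> / 2 * \<theta> * (1 - \<theta>) * (norm (a - b))\<^sup>2"
    using strongly_convex_onD[OF F ab] \<theta> by blast
  ultimately show "F (\<theta> *\<^sub>R a + (1 - \<theta>) *\<^sub>R b) + G (\<theta> *\<^sub>R a + (1 - \<theta>) *\<^sub>R b)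
      \<le> \<theta> * (F a + G a) + (1 - \<theta>) * (F b + G b) - \<mu> / 2 * \<theta> * (1 - \<theta>) * (norm (a - b))\<^sup>2"
    by (simp add: distrib_left)
qed

lemma convex_sublevel_le:
  assumes "convex_on UNIV f"
  shows "convex {y. f y \<le> c}"
proof (rule convexI)
  fix a b and u v :: real
  assume ab: "a \<in> {y. f y \<le> c}" "b \<in> {y. f y \<le> c}" and uv: "0 \<le> u" "0 \<le> v" "u + v = 1"
  have "f (u *\<^sub>R a + v *\<^sub>R b) \<le> u * f a + v * f b" using assms uv by (simp add: convex_on_def)
  also have "\<dots> \<le> u * c + v * c" using ab uv by (intro add_mono mult_left_mono) auto
  finally show "u *\<^sub>R a + v *\<^sub>R b \<in> {y. f y \<le> c}" using uv by (simp flip: distrib_right)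
qed

lemma convex_sublevel_less:
  assumes "convex_on UNIV f"
  shows "convex {y. f y < c}"
proof (rule convexI)
  fix a b and u v :: real
  assume ab: "a \<in> {y. f y < c}" "b \<in> {y. f y < c}" and uv: "0 \<le> u" "0 \<le> v" "u + v = 1"
  have "f (u *\<^sub>R a + v *\<^sub>R b) \<le> u * f a + v * f b" using assms uv by (simp add: convex_on_def)
  also have "\<dots> < u * c + v * c"
  proof (cases "u = 0")
    case True
    then show ?thesis using ab uv by simp
  next
    case False
    then show ?thesis using ab uv by (intro add_less_le_mono mult_strict_left_mono mult_left_mono) auto
  qed
  finally show "u *\<^sub>R a + v *\<^sub>R b \<in> {y. f y < c}" using uv by (simp flip: distrib_right)
qed

lemma convex_on_neg_ln_neg:
  assumes f: "convex_on S f" and neg: "\<And>y. y \<in> S \<Longrightarrow> f y < 0"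
  shows "convex_on S (\<lambda>y. - ln (- f y))"
proof
  show "convex S" using f by (rule convex_on_imp_convex)
  fix t :: real and a b assume t: "0 < t" "t < 1" and ab: "a \<in> S" "b \<in> S"
  have "(1 - t) * ln (- f a) + t * ln (- f b) \<le> ln ((1 - t) * (- f a) + t * (- f b))"
    using concave_onD[OF ln_concave, of t "- f a" "- f b"] t neg ab by simp
  also have "\<dots> \<le> ln (- f ((1 - t) *\<^sub>R a + t *\<^sub>R b))"
  proof (rule ln_mono)
    show "0 < (1 - t) * (- f a) + t * (- f b)"
      using t neg ab by (intro add_pos_pos mult_pos_pos) auto
    show "(1 - t) * (- f a) + t * (- f b) \<le> - f ((1 - t) *\<^sub>R a + t *\<^sub>R b)"
      using convex_onD[OF f, of t a b] t ab by simp
  qed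
  finally show "- ln (- f ((1 - t) *\<^sub>R a + t *\<^sub>R b)) \<le> (1 - t) * - ln (- f a) + t * - ln (- f b)"
    by simp
qed

lemma convex_on_log_barrier:
  fixes f :: "nat \<Rightarrow> 'a::real_vector \<Rightarrow> real" and k :: nat
  assumes "convex S" and "\<And>i. i < k \<Longrightarrow> convex_on S (f i)"
    and "\<And>i y. i < k \<Longrightarrow> y \<in> S \<Longrightarrow> f i y < 0"
  shows "convex_on S (\<lambda>y. - (\<Sum>i<k. ln (- f i y)))"
  using assms(2,3)
proof (induction k)
  case 0
  then show ?case using \<open>convex S\<close> by (simp add: convex_on_const)
next
  case (Suc k)
  have "convex_on S (\<lambda>y. - (\<Sum>i<k. ln (- f i y)) + - ln (- f k y))"
    using Suc by (intro convex_on_add convex_on_neg_ln_neg) auto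
  then show ?case by simp
qed

lemma strongly_convex_on_gradient_ineq:
  fixes F :: "'a::real_inner \<Rightarrow> real"
  assumes sc: "strongly_convex_on UNIV \<mu> F" and D: "(F has_derivative (\<lambda>w. D \<bullet> w)) (at y)"
  shows "F y + D \<bullet> (z - y) + \<mu> / 2 * (norm (z - y))\<^sup>2 \<le> F z"
proof -
  define \<phi> where "\<phi> \<theta> = F (y + \<theta> *\<^sub>R (z - y))" for \<theta> :: real
  have "((\<lambda>\<theta>::real. y + \<theta> *\<^sub>R (z - y)) has_derivative (\<lambda>\<theta>. \<theta> *\<^sub>R (z - y))) (at 0)"
    by (auto intro!: derivative_eq_intros)
  moreover have "(F has_derivative (\<lambda>w. D \<bullet> w)) (at (y + 0 *\<^sub>R (z - y)))" using D by simp
  ultimately have "(\<phi> has_derivative (\<lambda>\<theta>. D \<bullet> (\<theta> *\<^sub>R (z - y)))) (at 0)"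
    unfolding \<phi>_def by (rule has_derivative_compose)
  then have "(\<phi> has_field_derivative D \<bullet> (z - y)) (at 0)"
    by (simp add: has_field_derivative_def mult_commute_abs)
  then have "(\<phi> has_field_derivative D \<bullet> (z - y)) (at 0 within {0<..})"
    by (rule has_field_derivative_at_within)
  then have slope: "((\<lambda>\<theta>. (\<phi> \<theta> - \<phi> 0) / (\<theta> - 0)) \<longlongrightarrow> D \<bullet> (z - y)) (at_right 0)"
    by (simp add: has_field_derivative_iff)
  have bound: "((\<lambda>\<theta>. F z - F y - \<mu> / 2 * (1 - \<theta>) * (norm (z - y))\<^sup>2)
      \<longlongrightarrow> F z - F y - \<mu> / 2 * (1 - 0) * (norm (z - y))\<^sup>2) (at_right 0)"
    by (intro tendsto_intros)
  \<comment> \<open>the strong convexity inequality between \<open>y\<close> and \<open>z\<close> bounds every difference quotient\<close>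
  have "\<forall>\<^sub>F \<theta> in at_right 0. (\<phi> \<theta> - \<phi> 0) / (\<theta> - 0) \<le> F z - F y - \<mu> / 2 * (1 - \<theta>) * (norm (z - y))\<^sup>2"
    unfolding eventually_at_right_field
  proof (intro exI[of _ 1] conjI allI impI)
    fix \<theta> :: real assume \<theta>: "0 < \<theta>" "\<theta> < 1"
    have "\<theta> *\<^sub>R z + (1 - \<theta>) *\<^sub>R y = y + \<theta> *\<^sub>R (z - y)"
      by (simp add: algebra_simps)
    then have "\<phi> \<theta> \<le> \<theta> * F z + (1 - \<theta>) * F y - \<mu> / 2 * \<theta> * (1 - \<theta>) * (norm (z - y))\<^sup>2"
      using strongly_convex_onD[OF sc, of z y \<theta>] \<theta> unfolding \<phi>_def by simp
    then have "\<phi> \<theta> - \<phi> 0 \<le> \<theta> * (F z - F y - \<mu> / 2 * (1 - \<theta>) * (norm (z - y))\<^sup>2)"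
      unfolding \<phi>_def by (simp add: algebra_simps)
    then show "(\<phi> \<theta> - \<phi> 0) / (\<theta> - 0) \<le> F z - F y - \<mu> / 2 * (1 - \<theta>) * (norm (z - y))\<^sup>2"
      using \<theta> by (simp add: divide_le_eq mult.commute)
  qed simp
  from tendsto_le[OF _ bound slope this] show ?thesis by simp
qed

lemma strongly_convex_on_argmin_unique:
  assumes sc: "strongly_convex_on S \<mu> F" and \<mu>: "\<mu> > 0" and C: "convex C" "C \<subseteq> S"
    and a: "a \<in> C" "\<forall>y\<in>C. F a \<le> F y" and b: "b \<in> C" "\<forall>y\<in>C. F b \<le> F y"
  shows "a = b"
proof -
  define m where "m = (1/2) *\<^sub>R a + (1 - 1/2) *\<^sub>R b"
  have "m \<in> C" unfolding m_def using convexD[OF C(1) a(1) b(1)] by simp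
  then have "F a \<le> F m" using a by blast
  also have "F m \<le> 1/2 * F a + (1 - 1/2) * F b - \<mu> / 2 * (1/2) * (1 - 1/2) * (norm (a - b))\<^sup>2"
    unfolding m_def using strongly_convex_onD[OF sc, of a b "1/2"] a(1) b(1) C(2) by auto
  finally have "\<mu> * (norm (a - b))\<^sup>2 \<le> 0" using a b by fastforce
  then show ?thesis using \<mu> by (simp add: mult_le_0_iff)
qed

lemma strongly_convex_on_sublevel_bounded:
  assumes sc: "strongly_convex_on C \<mu> F" and \<mu>: "\<mu> > 0" and C: "convex C" "y0 \<in> C"
    and L: "\<And>y. y \<in> C \<Longrightarrow> norm (y - y0) \<le> 1 \<Longrightarrow> L \<le> F y"
    and y: "y \<in> C" "F y \<le> F y0"
  shows "norm (y - y0) \<le> 1 + 2 * (F y0 - L) / \<mu>"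
proof (cases "norm (y - y0) \<le> 1")
  case True
  moreover have "0 \<le> 2 * (F y0 - L) / \<mu>" using L[OF C(2)] \<mu> by simp
  ultimately show ?thesis by linarith
next
  case False
  define r where "r = norm (y - y0)"
  define \<theta> where "\<theta> = 1 / r"
  have r: "r > 1" using False unfolding r_def by simp
  then have \<theta>: "0 \<le> \<theta>" "\<theta> \<le> 1" unfolding \<theta>_def by auto
  \<comment> \<open>the point at distance 1 from \<open>y0\<close> on the segment towards \<open>y\<close>\<close>
  define z where "z = \<theta> *\<^sub>R y + (1 - \<theta>) *\<^sub>R y0"
  have "z \<in> C" unfolding z_def using convexD[OF C(1) y(1) C(2)] \<theta> by simp
  moreover have "norm (z - y0) = 1"
  proof -
    have "z - y0 = \<theta> *\<^sub>R (y - y0)" unfolding z_def by (simp add: algebra_simps)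
    moreover have "y \<noteq> y0" using r unfolding r_def by auto
    ultimately show ?thesis using r unfolding \<theta>_def r_def by simp
  qed
  ultimately have "L \<le> F z" by (intro L) auto
  also have "F z \<le> \<theta> * F y + (1 - \<theta>) * F y0 - \<mu> / 2 * \<theta> * (1 - \<theta>) * r\<^sup>2"
    using strongly_convex_onD[OF sc y(1) C(2) \<theta>] unfolding z_def r_def .
  also have "\<dots> \<le> F y0 - \<mu> / 2 * (r - 1)"
  proof -
    have "\<theta> * (1 - \<theta>) * r\<^sup>2 = r - 1" using r unfolding \<theta>_def by (simp add: field_simps power2_eq_square)
    moreover have "\<theta> * F y + (1 - \<theta>) * F y0 \<le> F y0" using y(2) \<theta> by (simp add: algebra_simps mult_left_mono)
    ultimately show ?thesis by (simp add: mult.assoc)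
  qed
  finally show ?thesis using \<mu> unfolding r_def by (simp add: field_simps)
qed

section \<open>Limits of nonnegative multipliers\<close>

text \<open>Dividing the multiplier equations by \<open>1 + (\<Sum>i<k. m n i)\<close> bounds all coefficients. In the
  limit, independence of the \<open>b0 i\<close>, \<open>i \<in> A\<close>, forces the weight \<open>\<sigma>\<close> of \<open>a0\<close> to be positive, so
  the multipliers themselves converge, to \<open>\<nu> i / \<sigma>\<close>.\<close>

lemma homogenized_multipliers_convergent_subseq:
  fixes m :: "nat \<Rightarrow> nat \<Rightarrow> real"
  assumes m_nonneg: "\<And>n i. i < k \<Longrightarrow> 0 \<le> m n i"
  defines "s \<equiv> \<lambda>n. 1 / (1 + (\<Sum>i<k. m n i))"
  shows "\<exists>r \<sigma> \<nu>. strict_mono r \<and> (\<lambda>n. s (r n)) \<longlonglongrightarrow> \<sigma>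
           \<and> (\<forall>i<k. (\<lambda>n. s (r n) * m (r n) i) \<longlonglongrightarrow> \<nu> i)"
proof -
  define u where "u n i = (if i = k then s n else s n * m n i)" for n i
  have sum_m_nonneg: "0 \<le> (\<Sum>i<k. m n i)" for n using m_nonneg by (intro sum_nonneg) auto
  have "\<bar>s n * m n i\<bar> \<le> 1" if "i < k" for n i
  proof -
    have "m n i \<le> (\<Sum>i<k. m n i)" using that m_nonneg by (intro member_le_sum) auto
    then have "m n i \<le> 1 + (\<Sum>i<k. m n i)" by simp
    moreover have "s n * m n i = m n i / (1 + (\<Sum>i<k. m n i))" unfolding s_def by simp
    ultimately show ?thesis using m_nonneg[OF that] sum_m_nonneg[of n] by (simp add: divide_le_eq_1)
  qed
  moreover have "\<bar>s n\<bar> \<le> 1" for n using sum_m_nonneg[of n] unfolding s_def by simp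
  ultimately have "\<bar>u n i\<bar> \<le> 1" if "i < Suc k" for n i
    using that unfolding u_def by (auto simp: less_Suc_eq)
  then obtain r \<nu> where r: "strict_mono r" and \<nu>: "\<forall>i<Suc k. (\<lambda>n. u (r n) i) \<longlonglongrightarrow> \<nu> i"
    using bounded_family_convergent_subseq[of "Suc k" u 1] by blast
  have "(\<lambda>n. s (r n)) \<longlonglongrightarrow> \<nu> k" using \<nu>[rule_format, of k] by (simp add: u_def)
  moreover have "(\<lambda>n. s (r n) * m (r n) i) \<longlonglongrightarrow> \<nu> i" if "i < k" for i
    using \<nu>[rule_format, of i] that by (simp add: u_def)
  ultimately show ?thesis using r by blast
qed

lemma homogenized_multipliers_limit:
  fixes a :: "nat \<Rightarrow> 'v::real_normed_vector" and b :: "nat \<Rightarrow> nat \<Rightarrow> 'v"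
    and m :: "nat \<Rightarrow> nat \<Rightarrow> real"
  assumes a: "a \<longlonglongrightarrow> a0" and b: "\<And>i. i < k \<Longrightarrow> (\<lambda>n. b n i) \<longlonglongrightarrow> b0 i"
    and m_nonneg: "\<And>n i. i < k \<Longrightarrow> 0 \<le> m n i"
    and eq: "\<And>n. a n + (\<Sum>i<k. m n i *\<^sub>R b n i) = 0"
    and inactive: "\<And>i. i < k \<Longrightarrow> i \<notin> A \<Longrightarrow> (\<lambda>n. m n i) \<longlonglongrightarrow> 0"
  defines "s \<equiv> \<lambda>n. 1 / (1 + (\<Sum>i<k. m n i))"
  shows "\<exists>r \<sigma> \<nu>. strict_mono r \<and> (\<lambda>n. s (r n)) \<longlonglongrightarrow> \<sigma>
           \<and> (\<forall>i<k. (\<lambda>n. s (r n) * m (r n) i) \<longlonglongrightarrow> \<nu> i) \<and> (\<forall>i<k. i \<notin> A \<longrightarrow> \<nu> i = 0)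
           \<and> \<sigma> + (\<Sum>i<k. \<nu> i) = 1 \<and> \<sigma> *\<^sub>R a0 + (\<Sum>i<k. \<nu> i *\<^sub>R b0 i) = 0"
proof -
  obtain r \<sigma> \<nu> where r: "strict_mono r" and s_lim: "(\<lambda>n. s (r n)) \<longlonglongrightarrow> \<sigma>"
    and sm_lim: "\<And>i. i < k \<Longrightarrow> (\<lambda>n. s (r n) * m (r n) i) \<longlonglongrightarrow> \<nu> i"
    using homogenized_multipliers_convergent_subseq[where k = k and m = m, OF m_nonneg]
    unfolding s_def by blast
  have "0 \<le> (\<Sum>i<k. m n i)" for n using m_nonneg by (intro sum_nonneg) auto
  then have s_sum: "s n * (1 + (\<Sum>i<k. m n i)) = 1" for n unfolding s_def by (simp add: add_nonneg_eq_0_iff)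
  have "\<nu> i = 0" if "i < k" "i \<notin> A" for i
  proof -
    have "(\<lambda>n. s (r n) * m (r n) i) \<longlonglongrightarrow> \<sigma> * 0"
      using s_lim LIMSEQ_subseq_LIMSEQ[OF inactive[OF that] r] by (intro tendsto_mult) (auto simp: o_def)
    from LIMSEQ_unique[OF sm_lim[OF that(1)] this] show ?thesis by simp
  qed
  moreover have "\<sigma> + (\<Sum>i<k. \<nu> i) = 1"
  proof -
    have "(\<lambda>n. s (r n) + (\<Sum>i<k. s (r n) * m (r n) i)) \<longlonglongrightarrow> \<sigma> + (\<Sum>i<k. \<nu> i)"
      using s_lim sm_lim by (intro tendsto_intros) auto
    moreover have "s n + (\<Sum>i<k. s n * m n i) = 1" for n
      using s_sum[of n] by (simp add: sum_distrib_left distrib_left)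
    ultimately show ?thesis by (simp add: LIMSEQ_const_iff)
  qed
  moreover have "\<sigma> *\<^sub>R a0 + (\<Sum>i<k. \<nu> i *\<^sub>R b0 i) = 0"
  proof -
    have "(\<lambda>n. s (r n) *\<^sub>R a (r n) + (\<Sum>i<k. (s (r n) * m (r n) i) *\<^sub>R b (r n) i))
        \<longlonglongrightarrow> \<sigma> *\<^sub>R a0 + (\<Sum>i<k. \<nu> i *\<^sub>R b0 i)"
      using s_lim sm_lim LIMSEQ_subseq_LIMSEQ[OF a r] LIMSEQ_subseq_LIMSEQ[OF b r]
      by (intro tendsto_intros) (auto simp: o_def)
    moreover have "s n *\<^sub>R a n + (\<Sum>i<k. (s n * m n i) *\<^sub>R b n i) = 0" for n
      using arg_cong[OF eq[of n], of "scaleR (s n)"] by (simp add: scaleR_add_right scaleR_sum_right)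
    ultimately show ?thesis by (simp add: LIMSEQ_const_iff)
  qed
  ultimately show ?thesis using r s_lim sm_lim by blast
qed

lemma nonneg_multipliers_convergent_subseq:
  fixes a :: "nat \<Rightarrow> 'v::real_normed_vector" and b :: "nat \<Rightarrow> nat \<Rightarrow> 'v"
    and m :: "nat \<Rightarrow> nat \<Rightarrow> real"
  assumes a: "a \<longlonglongrightarrow> a0" and b: "\<And>i. i < k \<Longrightarrow> (\<lambda>n. b n i) \<longlonglongrightarrow> b0 i"
    and m_nonneg: "\<And>n i. i < k \<Longrightarrow> 0 \<le> m n i"
    and eq: "\<And>n. a n + (\<Sum>i<k. m n i *\<^sub>R b n i) = 0"
    and inactive: "\<And>i. i < k \<Longrightarrow> i \<notin> A \<Longrightarrow> (\<lambda>n. m n i) \<longlonglongrightarrow> 0"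
    and indep: "\<And>c. (\<Sum>i\<in>A. c i *\<^sub>R b0 i) = 0 \<Longrightarrow> \<forall>i\<in>A. c i = 0"
    and A: "A \<subseteq> {..<k}"
  shows "\<exists>r l. strict_mono r \<and> (\<forall>i<k. (\<lambda>n. m (r n) i) \<longlonglongrightarrow> l i) \<and> (\<forall>i<k. 0 \<le> l i)
           \<and> (\<forall>i<k. i \<notin> A \<longrightarrow> l i = 0) \<and> a0 + (\<Sum>i<k. l i *\<^sub>R b0 i) = 0"
proof -
  define s where "s n = 1 / (1 + (\<Sum>i<k. m n i))" for n
  have "0 \<le> (\<Sum>i<k. m n i)" for n using m_nonneg by (intro sum_nonneg) auto
  then have s_pos: "0 < s n" for n unfolding s_def by (simp add: add_pos_nonneg)
  obtain r \<sigma> \<nu> where r: "strict_mono r" and s_lim: "(\<lambda>n. s (r n)) \<longlonglongrightarrow> \<sigma>"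
    and sm_lim: "\<And>i. i < k \<Longrightarrow> (\<lambda>n. s (r n) * m (r n) i) \<longlonglongrightarrow> \<nu> i"
    and \<nu>_inactive: "\<And>i. i < k \<Longrightarrow> i \<notin> A \<Longrightarrow> \<nu> i = 0"
    and sum_1: "\<sigma> + (\<Sum>i<k. \<nu> i) = 1" and lim_eq: "\<sigma> *\<^sub>R a0 + (\<Sum>i<k. \<nu> i *\<^sub>R b0 i) = 0"
    using homogenized_multipliers_limit[where k = k and m = m and A = A, OF a b m_nonneg eq inactive]
    unfolding s_def by blast
  have \<nu>_nonneg: "0 \<le> \<nu> i" if "i < k" for i
  proof -
    have "0 \<le> s (r n) * m (r n) i" for n using s_pos[of "r n"] m_nonneg[OF that, of "r n"] by simp
    then show ?thesis using LIMSEQ_le_const[OF sm_lim[OF that], of 0] by blast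
  qed
  have \<sigma>_pos: "\<sigma> > 0"
  proof (rule ccontr)
    assume "\<not> \<sigma> > 0"
    moreover have "\<sigma> \<ge> 0" using LIMSEQ_le_const[OF s_lim, of 0] s_pos less_imp_le by blast
    ultimately have "\<sigma> = 0" by simp
    moreover have "(\<Sum>i\<in>A. \<nu> i *\<^sub>R b0 i) = (\<Sum>i<k. \<nu> i *\<^sub>R b0 i)"
      using A \<nu>_inactive by (intro sum.mono_neutral_left) auto
    ultimately have "\<forall>i\<in>A. \<nu> i = 0" using lim_eq indep by simp
    then have "\<nu> i = 0" if "i < k" for i using \<nu>_inactive that by blast
    then show False using sum_1 \<open>\<sigma> = 0\<close> by simp
  qed
  define l where "l i = \<nu> i / \<sigma>" for i
  have "(\<lambda>n. m (r n) i) \<longlonglongrightarrow> l i" if "i < k" for i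
  proof -
    have "(\<lambda>n. (s (r n) * m (r n) i) / s (r n)) \<longlonglongrightarrow> \<nu> i / \<sigma>"
      using sm_lim[OF that] s_lim \<sigma>_pos by (intro tendsto_divide) auto
    then show ?thesis using s_pos unfolding l_def by (simp add: less_imp_neq[symmetric])
  qed
  moreover have "a0 + (\<Sum>i<k. l i *\<^sub>R b0 i) = (1 / \<sigma>) *\<^sub>R (\<sigma> *\<^sub>R a0 + (\<Sum>i<k. \<nu> i *\<^sub>R b0 i))"
    using \<sigma>_pos by (simp add: l_def scaleR_add_right scaleR_sum_right divide_inverse mult.commute)
  moreover have "\<forall>i<k. 0 \<le> l i" using \<nu>_nonneg \<sigma>_pos by (simp add: l_def)
  moreover have "\<forall>i<k. i \<notin> A \<longrightarrow> l i = 0" using \<nu>_inactive by (simp add: l_def)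
  ultimately show ?thesis using r lim_eq by auto
qed

section \<open>The log-barrier problem\<close>

locale log_barrier =
  fixes g :: "'x::metric_space \<Rightarrow> 'y::euclidean_space \<Rightarrow> real"
    and h :: "nat \<Rightarrow> 'x \<Rightarrow> 'y \<Rightarrow> real" and k :: nat and X :: "'x set" and \<mu> :: real
  assumes g_cont: "continuous_on UNIV (case_prod g)"
    and h_cont: "\<And>i. i < k \<Longrightarrow> continuous_on UNIV (case_prod (h i))"
    and g_deriv: "\<And>x y. (g x has_derivative (\<lambda>w. grad_y g x y \<bullet> w)) (at y)"
    and grad_g_cont: "continuous_on UNIV (case_prod (grad_y g))"
    and h_deriv: "\<And>i x y. i < k \<Longrightarrow> (h i x has_derivative (\<lambda>w. grad_y (h i) x y \<bullet> w)) (at y)"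
    and grad_h_cont: "\<And>i. i < k \<Longrightarrow> continuous_on UNIV (case_prod (grad_y (h i)))"
    and compact_X: "compact X"
    and slater: "\<And>x. x \<in> X \<Longrightarrow> \<exists>y. \<forall>i<k. h i x y < 0"
    and licq: "\<And>x c. x \<in> X \<Longrightarrow>
      (\<Sum>i\<in>{i. i < k \<and> h i x (ystar g h k x) = 0}. c i *\<^sub>R grad_y (h i) x (ystar g h k x)) = 0 \<Longrightarrow>
      \<forall>i\<in>{i. i < k \<and> h i x (ystar g h k x) = 0}. c i = 0"
    and \<mu>_pos: "\<mu> > 0"
    and g_strongly_convex: "\<And>x. x \<in> X \<Longrightarrow> strongly_convex_on UNIV \<mu> (g x)"
    and h_convex: "\<And>x i. x \<in> X \<Longrightarrow> i < k \<Longrightarrow> convex_on UNIV (h i x)"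
begin

lemma continuous_on_g: "continuous_on S (g x)"
  by (rule continuous_on_case_prod_slice[OF g_cont])

lemma continuous_on_h: "i < k \<Longrightarrow> continuous_on S (h i x)"
  by (rule continuous_on_case_prod_slice[OF h_cont])

definition strict_feas :: "'x \<Rightarrow> 'y set" where
  "strict_feas x = {y. \<forall>i<k. h i x y < 0}"

lemma strict_feas_eq_INT: "strict_feas x = (\<Inter>i\<in>{..<k}. {y. h i x y < 0})"
  by (auto simp: strict_feas_def)

lemma open_strict_feas: "open (strict_feas x)"
  unfolding strict_feas_eq_INT
  by (intro open_INT finite_lessThan ballI open_Collect_less continuous_on_const continuous_on_h) simp

lemma convex_strict_feas: "x \<in> X \<Longrightarrow> convex (strict_feas x)"
  unfolding strict_feas_eq_INT by (intro convex_INT convex_sublevel_less h_convex) auto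

lemma convex_feas:
  assumes "x \<in> X"
  shows "convex (feas h k x)"
proof -
  have "feas h k x = (\<Inter>i\<in>{..<k}. {y. h i x y \<le> 0})" by (auto simp: feas_def)
  then show ?thesis using assms by (auto intro!: convex_INT convex_sublevel_le h_convex)
qed

lemma gbar_strongly_convex:
  assumes x: "x \<in> X" and t: "t > 0"
  shows "strongly_convex_on (strict_feas x) \<mu> (gbar g h k t x)"
proof -
  have "convex_on (strict_feas x) (\<lambda>y. t * - (\<Sum>i<k. ln (- h i x y)))"
    using t convex_strict_feas[OF x]
    by (intro convex_on_cmul convex_on_log_barrier convex_on_subset[OF h_convex[OF x]])
      (auto simp: strict_feas_def)
  from strongly_convex_on_add_convex[OF
      strongly_convex_on_subset[OF g_strongly_convex[OF x] subset_UNIV] this]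
  show ?thesis by (simp add: gbar_def[abs_def])
qed

lemma continuous_on_gbar: "continuous_on (strict_feas x) (gbar g h k t x)"
  unfolding gbar_def[abs_def]
  by (intro continuous_intros continuous_on_g continuous_on_h) (auto simp: strict_feas_def)

lemma g_h_bounded_on_compact:
  assumes "compact K"
  shows "\<exists>M>0. \<forall>y\<in>K. \<bar>g x y\<bar> \<le> M \<and> (\<forall>i<k. \<bar>h i x y\<bar> \<le> M)"
proof -
  define \<phi> where "\<phi> y = \<bar>g x y\<bar> + (\<Sum>i<k. \<bar>h i x y\<bar>)" for y
  have "continuous_on K \<phi>"
    unfolding \<phi>_def by (intro continuous_intros continuous_on_g continuous_on_h) simp
  then have "bounded (\<phi> ` K)" using assms by (intro compact_imp_bounded compact_continuous_image)
  then obtain M where "M > 0" and "\<And>y. y \<in> K \<Longrightarrow> \<bar>\<phi> y\<bar> \<le> M" unfolding bounded_pos by auto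
  then have M: "\<phi> y \<le> M" if "y \<in> K" for y using that abs_ge_self order_trans by blast
  have h_le: "\<bar>h i x y\<bar> \<le> \<phi> y" if "i < k" for i y
  proof -
    have "\<bar>h i x y\<bar> \<le> (\<Sum>i<k. \<bar>h i x y\<bar>)" using that by (intro member_le_sum) auto
    then show ?thesis unfolding \<phi>_def by simp
  qed
  have g_le: "\<bar>g x y\<bar> \<le> \<phi> y" for y unfolding \<phi>_def by (simp add: sum_nonneg)
  have "\<forall>y\<in>K. \<bar>g x y\<bar> \<le> M \<and> (\<forall>i<k. \<bar>h i x y\<bar> \<le> M)"
  proof (intro ballI conjI allI impI)
    fix y assume y: "y \<in> K"
    show "\<bar>g x y\<bar> \<le> M" using g_le[of y] M[OF y] by linarith
    show "\<bar>h i x y\<bar> \<le> M" if "i < k" for i using h_le[OF that, of y] M[OF y] by linarith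
  qed
  then show ?thesis using \<open>M > 0\<close> by blast
qed

lemma gbar_bounded_below_on_compact:
  assumes t: "t > 0" and K: "compact K"
  obtains L where "\<And>y. y \<in> K \<inter> strict_feas x \<Longrightarrow> L \<le> gbar g h k t x y"
proof -
  obtain M where g: "\<And>y. y \<in> K \<Longrightarrow> \<bar>g x y\<bar> \<le> M"
    and h: "\<And>i y. i < k \<Longrightarrow> y \<in> K \<Longrightarrow> \<bar>h i x y\<bar> \<le> M"
    using g_h_bounded_on_compact[OF K, of x] by blast
  have "- M - t * (k * M) \<le> gbar g h k t x y" if y: "y \<in> K \<inter> strict_feas x" for y
  proof -
    have "(\<Sum>i<k. ln (- h i x y)) \<le> (\<Sum>i<k. M)"
      using y h by (intro sum_mono ln_minus_le_of_abs_le) (auto simp: strict_feas_def)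
    then have "t * (\<Sum>i<k. ln (- h i x y)) \<le> t * (k * M)" using t by (simp add: mult_left_mono)
    then show ?thesis using g[of y] y unfolding gbar_def by auto
  qed
  then show ?thesis using that by blast
qed

lemma gbar_large_near_boundary:
  assumes t: "t > 0" and K: "compact K"
  obtains \<delta> where "\<delta> > 0"
    "\<And>y j. y \<in> K \<inter> strict_feas x \<Longrightarrow> j < k \<Longrightarrow> - h j x y < \<delta> \<Longrightarrow> B < gbar g h k t x y"
proof -
  obtain M where M: "M > 0" and g: "\<And>y. y \<in> K \<Longrightarrow> \<bar>g x y\<bar> \<le> M"
    and h: "\<And>i y. i < k \<Longrightarrow> y \<in> K \<Longrightarrow> \<bar>h i x y\<bar> \<le> M"
    using g_h_bounded_on_compact[OF K, of x] by blast
  define \<delta> where "\<delta> = exp ((- M - B) / t - k * M - 1)"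
  have "B < gbar g h k t x y" if y: "y \<in> K \<inter> strict_feas x" and j: "j < k" and hj: "- h j x y < \<delta>" for y j
  proof -
    have neg: "h i x y < 0" if "i < k" for i using y that by (auto simp: strict_feas_def)
    have "(\<Sum>i<k. ln (- h i x y)) = ln (- h j x y) + (\<Sum>i\<in>{..<k} - {j}. ln (- h i x y))"
      using j by (simp add: sum.remove)
    also have "\<dots> \<le> ln \<delta> + (\<Sum>i\<in>{..<k} - {j}. M)"
    proof (rule add_mono)
      show "ln (- h j x y) \<le> ln \<delta>" using hj neg[OF j] by simp
      show "(\<Sum>i\<in>{..<k} - {j}. ln (- h i x y)) \<le> (\<Sum>i\<in>{..<k} - {j}. M)"
        using neg y h by (intro sum_mono ln_minus_le_of_abs_le) auto
    qed
    also have "\<dots> \<le> ln \<delta> + k * M"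
      using M j by (simp add: card_Diff_singleton mult_right_mono)
    finally have "t * (\<Sum>i<k. ln (- h i x y)) \<le> t * (ln \<delta> + k * M)"
      using t by (intro mult_left_mono) auto
    moreover have "- M - t * (ln \<delta> + k * M) = B + t"
      unfolding \<delta>_def using t by (simp add: field_simps)
    moreover have "- M \<le> g x y" using g[of y] y by auto
    ultimately show ?thesis using t unfolding gbar_def by linarith
  qed
  then show ?thesis using that[of \<delta>] unfolding \<delta>_def by simp
qed

lemma gbar_sublevel_bounded:
  assumes x: "x \<in> X" and t: "t > 0" and y0: "y0 \<in> strict_feas x"
  obtains R where "\<And>y. y \<in> strict_feas x \<Longrightarrow> gbar g h k t x y \<le> gbar g h k t x y0 \<Longrightarrow> y \<in> cball y0 R"
proof -
  obtain L where "\<And>y. y \<in> cball y0 1 \<inter> strict_feas x \<Longrightarrow> L \<le> gbar g h k t x y"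
    using gbar_bounded_below_on_compact[OF t compact_cball, where x = x] by metis
  then have L: "L \<le> gbar g h k t x y" if "y \<in> strict_feas x" "norm (y - y0) \<le> 1" for y
    using that by (simp add: dist_norm norm_minus_commute)
  have "norm (y - y0) \<le> 1 + 2 * (gbar g h k t x y0 - L) / \<mu>"
    if "y \<in> strict_feas x" "gbar g h k t x y \<le> gbar g h k t x y0" for y
    by (rule strongly_convex_on_sublevel_bounded[OF gbar_strongly_convex[OF x t] \<mu>_pos
          convex_strict_feas[OF x] y0 L that])
  then show ?thesis
    by (intro that[of "1 + 2 * (gbar g h k t x y0 - L) / \<mu>"]) (simp add: dist_norm norm_minus_commute)
qed

lemma gbar_has_minimizer:
  assumes x: "x \<in> X" and t: "t > 0"
  shows "\<exists>y\<in>strict_feas x. \<forall>z\<in>strict_feas x. gbar g h k t x y \<le> gbar g h k t x z"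
proof -
  let ?B = "gbar g h k t x" and ?S = "strict_feas x"
  obtain y0 where y0: "y0 \<in> ?S" using slater[OF x] by (auto simp: strict_feas_def)
  obtain R where far: "\<And>y. y \<in> ?S \<Longrightarrow> ?B y \<le> ?B y0 \<Longrightarrow> y \<in> cball y0 R"
    using gbar_sublevel_bounded[OF x t y0] by metis
  obtain \<delta> where \<delta>: "\<delta> > 0"
    and near: "\<And>y j. y \<in> cball y0 R \<inter> ?S \<Longrightarrow> j < k \<Longrightarrow> - h j x y < \<delta> \<Longrightarrow> ?B y0 < ?B y"
    using gbar_large_near_boundary[OF t compact_cball, where x = x and B = "?B y0"] by metis
  define K where "K = cball y0 R \<inter> (\<Inter>i\<in>{..<k}. {y. \<delta> \<le> - h i x y})"
  have K_S: "K \<subseteq> ?S"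
  proof
    fix y assume "y \<in> K"
    then have "\<delta> \<le> - h i x y" if "i < k" for i using that unfolding K_def by auto
    then show "y \<in> ?S" using \<delta> unfolding strict_feas_def by force
  qed
  have compact: "compact K"
    unfolding K_def
    by (intro compact_Int_closed compact_cball closed_INT ballI closed_Collect_le
        continuous_intros continuous_on_h) auto
  have y0_K: "y0 \<in> K"
  proof -
    have "y0 \<in> cball y0 R" using far[OF y0] by simp
    moreover have "\<delta> \<le> - h i x y0" if "i < k" for i
      using near[of y0 i] \<open>y0 \<in> cball y0 R\<close> y0 that by fastforce
    ultimately show ?thesis unfolding K_def by blast
  qed
  have large: "?B y0 < ?B z" if z: "z \<in> ?S" "z \<notin> K" for z
  proof (rule ccontr)
    assume le: "\<not> ?B y0 < ?B z"
    then have "z \<in> cball y0 R" using far[OF z(1)] by simp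
    with z(2) obtain j where "j < k" "- h j x z < \<delta>" unfolding K_def by auto
    then show False using near[of z j] z(1) \<open>z \<in> cball y0 R\<close> le by simp
  qed
  show ?thesis
    by (rule continuous_attains_inf_if_large_outside_compact[OF compact K_S y0_K
          continuous_on_subset[OF continuous_on_gbar K_S] large])
qed

lemma ybar_minimizer:
  assumes x: "x \<in> X" and t: "t > 0"
  shows "ybar g h k t x \<in> strict_feas x"
    and "\<And>z. z \<in> strict_feas x \<Longrightarrow> gbar g h k t x (ybar g h k t x) \<le> gbar g h k t x z"
proof -
  let ?P = "\<lambda>y. y \<in> strict_feas x \<and> (\<forall>z\<in>strict_feas x. gbar g h k t x y \<le> gbar g h k t x z)"
  have "\<exists>!y. ?P y"
    using gbar_has_minimizer[OF x t]
      strongly_convex_on_argmin_unique[OF gbar_strongly_convex[OF x t] \<mu>_pos convex_strict_feas[OF x]]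
    by blast
  moreover have "ybar g h k t x = (THE y. ?P y)"
    unfolding ybar_def strict_feas_def by simp
  ultimately have "?P (ybar g h k t x)" using theI' by simp
  then show "ybar g h k t x \<in> strict_feas x"
    and "\<And>z. z \<in> strict_feas x \<Longrightarrow> gbar g h k t x (ybar g h k t x) \<le> gbar g h k t x z"
    by blast+
qed

lemma h_ybar_neg: "x \<in> X \<Longrightarrow> t > 0 \<Longrightarrow> i < k \<Longrightarrow> h i x (ybar g h k t x) < 0"
  using ybar_minimizer(1) unfolding strict_feas_def by blast

lemma barrier_stationary:
  assumes x: "x \<in> X" and t: "t > 0"
  defines "y \<equiv> ybar g h k t x"
  shows "grad_y g x y + (\<Sum>i<k. (t / - h i x y) *\<^sub>R grad_y (h i) x y) = 0"
    (is "?V = 0")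
proof -
  have neg: "h i x y < 0" if "i < k" for i using h_ybar_neg[OF x t that] unfolding y_def .
  have "(gbar g h k t x has_derivative (\<lambda>w. grad_y g x y \<bullet> w
      - t * (\<Sum>i<k. - (grad_y (h i) x y \<bullet> w) * inverse (- h i x y)))) (at y)"
    unfolding gbar_def[abs_def] using neg
    by (intro derivative_eq_intros g_deriv h_deriv refl) (auto intro: g_deriv h_deriv)
  moreover have "grad_y g x y \<bullet> w - t * (\<Sum>i<k. - (grad_y (h i) x y \<bullet> w) * inverse (- h i x y))
      = ?V \<bullet> w" for w
  proof -
    have "t * (\<Sum>i<k. - (grad_y (h i) x y \<bullet> w) * inverse (- h i x y))
        = - (\<Sum>i<k. (t / - h i x y) * (grad_y (h i) x y \<bullet> w))"
      by (simp add: sum_distrib_left sum_negf[symmetric] divide_inverse mult_ac)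
    then show ?thesis by (simp add: inner_add_left inner_sum_left)
  qed
  ultimately have "(gbar g h k t x has_derivative (\<lambda>w. ?V \<bullet> w)) (at y)" by simp
  then have "(\<lambda>w. ?V \<bullet> w) = (\<lambda>w. 0)"
    using differential_zero_maxmin[OF _ open_strict_feas] ybar_minimizer[OF x t] unfolding y_def
    by blast
  from fun_cong[OF this, of ?V] show ?thesis by simp
qed

lemma barrier_gap:
  assumes x: "x \<in> X" and t: "t > 0" and z: "z \<in> feas h k x"
  defines "y \<equiv> ybar g h k t x"
  shows "\<mu> / 2 * (norm (z - y))\<^sup>2 \<le> g x z - g x y + real k * t"
proof -
  have neg: "h i x y < 0" if "i < k" for i using h_ybar_neg[OF x t that] unfolding y_def .
  \<comment> \<open>each barrier multiplier \<open>t / - h i x y\<close> contributes at most \<open>t\<close> to the first-order term\<close>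
  have "(t / - h i x y) * (grad_y (h i) x y \<bullet> (z - y)) \<le> t" if i: "i < k" for i
  proof -
    have "grad_y (h i) x y \<bullet> (z - y) \<le> h i x z - h i x y"
      using strongly_convex_on_gradient_ineq[OF convex_on_imp_strongly_convex_on_0[OF h_convex[OF x i]]
          h_deriv[OF i, of x y], of z] by simp
    also have "\<dots> \<le> - h i x y" using z i by (simp add: feas_def)
    finally have "(t / - h i x y) * (grad_y (h i) x y \<bullet> (z - y)) \<le> (t / - h i x y) * (- h i x y)"
      using neg[OF i] t by (intro mult_left_mono divide_nonneg_pos) auto
    also have "\<dots> = t" using neg[OF i] by simp
    finally show ?thesis .
  qed
  then have "(\<Sum>i<k. (t / - h i x y) * (grad_y (h i) x y \<bullet> (z - y))) \<le> real k * t"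
    using sum_mono[of "{..<k}" _ "\<lambda>_. t"] by simp
  moreover have "grad_y g x y = - (\<Sum>i<k. (t / - h i x y) *\<^sub>R grad_y (h i) x y)"
    using barrier_stationary[OF x t] unfolding y_def by (simp add: eq_neg_iff_add_eq_0)
  moreover have "g x y + grad_y g x y \<bullet> (z - y) + \<mu> / 2 * (norm (z - y))\<^sup>2 \<le> g x z"
    by (rule strongly_convex_on_gradient_ineq[OF g_strongly_convex[OF x] g_deriv])
  ultimately show ?thesis by (simp add: inner_sum_left)
qed

lemma ystar_eqI:
  assumes x: "x \<in> X" and l: "l \<in> feas h k x" "\<forall>z\<in>feas h k x. g x l \<le> g x z"
  shows "ystar g h k x = l"
  unfolding ystar_def
  using strongly_convex_on_argmin_unique[OF g_strongly_convex[OF x] \<mu>_pos convex_feas[OF x]] l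
  by (intro the_equality) blast+

lemma eventually_in_strict_feas:
  assumes xs: "(xs \<longlongrightarrow> x0) F" and y: "y \<in> strict_feas x0"
  shows "\<forall>\<^sub>F n in F. y \<in> strict_feas (xs n)"
proof -
  have "\<forall>\<^sub>F n in F. h i (xs n) y < 0" if "i < k" for i
  proof (rule order_tendstoD)
    show "((\<lambda>n. h i (xs n) y) \<longlongrightarrow> h i x0 y) F"
      by (rule tendsto_case_prod_continuous[OF h_cont[OF that] xs tendsto_const])
  qed (use y that in \<open>simp add: strict_feas_def\<close>)
  then have "\<forall>\<^sub>F n in F. \<forall>i\<in>{..<k}. h i (xs n) y < 0"
    by (subst eventually_ball_finite_distrib) auto
  then show ?thesis by (rule eventually_mono) (simp add: strict_feas_def)
qed

lemma ybar_dist_le: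
  assumes x: "x \<in> X" and t: "t > 0" and y0: "y0 \<in> feas h k x"
  shows "norm (ybar g h k t x - y0) \<le> max 1 ((norm (grad_y g x y0) + real k * t) / \<mu>)"
proof -
  define y where "y = ybar g h k t x"
  define d where "d = norm (y - y0)"
  define C where "C = norm (grad_y g x y0)"
  have "\<mu> / 2 * d\<^sup>2 \<le> g x y0 - g x y + real k * t"
    using barrier_gap[OF x t y0] unfolding y_def d_def by (simp add: norm_minus_commute)
  moreover have "g x y0 + grad_y g x y0 \<bullet> (y - y0) + \<mu> / 2 * d\<^sup>2 \<le> g x y"
    unfolding d_def by (rule strongly_convex_on_gradient_ineq[OF g_strongly_convex[OF x] g_deriv])
  moreover have "- (grad_y g x y0 \<bullet> (y - y0)) \<le> C * d"
    using norm_cauchy_schwarz[of "- grad_y g x y0" "y - y0"] unfolding C_def d_def by simp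
  ultimately have quadratic: "\<mu> * d\<^sup>2 \<le> C * d + real k * t" by linarith
  show ?thesis
  proof (cases "d \<le> 1")
    case False
    then have "real k * t * 1 \<le> real k * t * d" using t by (intro mult_left_mono) auto
    with quadratic have "(\<mu> * d) * d \<le> (C + real k * t) * d"
      by (simp add: power2_eq_square algebra_simps)
    then have "\<mu> * d \<le> C + real k * t" using False by simp
    then have "d \<le> (C + real k * t) / \<mu>" using \<mu>_pos by (simp add: pos_le_divide_eq mult.commute)
    then show ?thesis unfolding y_def[symmetric] d_def[symmetric] C_def[symmetric] by simp
  qed (simp add: y_def d_def)
qed

lemma ybar_limit_feasible:
  assumes xs: "\<And>n. xs n \<in> X" "xs \<longlonglongrightarrow> x0" and ts: "\<And>n. ts n > 0"
    and lim: "(\<lambda>n. ybar g h k (ts n) (xs n)) \<longlonglongrightarrow> l"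
  shows "l \<in> feas h k x0"
proof -
  have "h i x0 l \<le> 0" if "i < k" for i
  proof (rule LIMSEQ_le_const2)
    show "(\<lambda>n. h i (xs n) (ybar g h k (ts n) (xs n))) \<longlonglongrightarrow> h i x0 l"
      by (rule tendsto_case_prod_continuous[OF h_cont[OF that] xs(2) lim])
    show "\<exists>N. \<forall>n\<ge>N. h i (xs n) (ybar g h k (ts n) (xs n)) \<le> 0"
      using h_ybar_neg[OF xs(1) ts that] less_imp_le by blast
  qed
  then show ?thesis by (simp add: feas_def)
qed

lemma ybar_limit_le_strict:
  assumes xs: "\<And>n. xs n \<in> X" "xs \<longlonglongrightarrow> x0" and ts: "\<And>n. ts n > 0" "ts \<longlonglongrightarrow> 0"
    and lim: "(\<lambda>n. ybar g h k (ts n) (xs n)) \<longlonglongrightarrow> l" and z: "z \<in> strict_feas x0"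
  shows "g x0 l \<le> g x0 z"
proof (rule tendsto_le[OF _ _ tendsto_case_prod_continuous[OF g_cont xs(2) lim]])
  have "(\<lambda>n. g (xs n) z + real k * ts n) \<longlonglongrightarrow> g x0 z + real k * 0"
    using tendsto_case_prod_continuous[OF g_cont xs(2) tendsto_const] ts(2)
    by (intro tendsto_intros)
  then show "(\<lambda>n. g (xs n) z + real k * ts n) \<longlonglongrightarrow> g x0 z" by simp
  show "\<forall>\<^sub>F n in sequentially. g (xs n) (ybar g h k (ts n) (xs n)) \<le> g (xs n) z + real k * ts n"
    using eventually_in_strict_feas[OF xs(2) z]
  proof (rule eventually_mono)
    fix n assume "z \<in> strict_feas (xs n)"
    then have zf: "z \<in> feas h k (xs n)" by (auto simp: strict_feas_def feas_def less_imp_le)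
    have "0 \<le> \<mu> / 2 * (norm (z - ybar g h k (ts n) (xs n)))\<^sup>2" using \<mu>_pos by simp
    then show "g (xs n) (ybar g h k (ts n) (xs n)) \<le> g (xs n) z + real k * ts n"
      using barrier_gap[OF xs(1) ts(1)[of n] zf] by linarith
  qed
qed simp

lemma ybar_limit_eq_ystar:
  assumes xs: "\<And>n. xs n \<in> X" "xs \<longlonglongrightarrow> x0" and x0: "x0 \<in> X"
    and ts: "\<And>n. ts n > 0" "ts \<longlonglongrightarrow> 0"
    and lim: "(\<lambda>n. ybar g h k (ts n) (xs n)) \<longlonglongrightarrow> l"
  shows "ystar g h k x0 = l"
proof (rule ystar_eqI[OF x0 ybar_limit_feasible[OF xs ts(1) lim]], intro ballI)
  fix z assume z: "z \<in> feas h k x0"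
  \<comment> \<open>approach \<open>z\<close> from the strictly feasible side\<close>
  obtain y0 where y0: "y0 \<in> strict_feas x0" using slater[OF x0] by (auto simp: strict_feas_def)
  define p where "p \<theta> = (1 - \<theta>) *\<^sub>R z + \<theta> *\<^sub>R y0" for \<theta> :: real
  have p_strict: "p \<theta> \<in> strict_feas x0" if \<theta>: "0 < \<theta>" "\<theta> < 1" for \<theta>
    unfolding strict_feas_def
  proof (intro CollectI allI impI)
    fix i assume i: "i < k"
    have "h i x0 (p \<theta>) \<le> (1 - \<theta>) * h i x0 z + \<theta> * h i x0 y0"
      unfolding p_def using convex_onD[OF h_convex[OF x0 i], of \<theta> z y0] \<theta> by simp
    moreover have "(1 - \<theta>) * h i x0 z \<le> 0" using z i \<theta> by (simp add: feas_def mult_nonneg_nonpos)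
    moreover have "\<theta> * h i x0 y0 < 0" using y0 i \<theta> by (simp add: strict_feas_def mult_pos_neg)
    ultimately show "h i x0 (p \<theta>) < 0" by linarith
  qed
  have "\<forall>\<^sub>F \<theta> in at_right 0. g x0 l \<le> g x0 (p \<theta>)"
    unfolding eventually_at_right_field
  proof (intro exI[of _ 1] conjI allI impI)
    fix \<theta> :: real assume "0 < \<theta>" "\<theta> < 1"
    then show "g x0 l \<le> g x0 (p \<theta>)" by (intro ybar_limit_le_strict[OF xs ts lim] p_strict)
  qed simp
  moreover have "((\<lambda>\<theta>. g x0 (p \<theta>)) \<longlongrightarrow> g x0 (p 0)) (at_right 0)"
  proof (rule isCont_tendsto_compose[of "p 0" "g x0"])
    show "isCont (g x0) (p 0)"
      using continuous_on_g[of UNIV x0] by (simp add: continuous_on_eq_continuous_at)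
    show "(p \<longlongrightarrow> p 0) (at_right 0)" unfolding p_def by (intro tendsto_intros)
  qed
  ultimately have "g x0 l \<le> g x0 (p 0)" by (intro tendsto_lowerbound) auto
  then show "g x0 l \<le> g x0 z" by (simp add: p_def)
qed

lemma ybar_eventually_bounded:
  assumes xs: "\<And>n. xs n \<in> X" "xs \<longlonglongrightarrow> x0" and ts: "\<And>n. ts n > 0" "ts \<longlonglongrightarrow> 0"
    and y0: "y0 \<in> strict_feas x0"
  shows "\<exists>R. \<forall>\<^sub>F n in sequentially. ybar g h k (ts n) (xs n) \<in> cball y0 R"
proof -
  obtain C where C: "\<And>n. norm (grad_y g (xs n) y0) \<le> C"
    using convergent_imp_Bseq[of "\<lambda>n. grad_y g (xs n) y0"]
      tendsto_case_prod_continuous[OF grad_g_cont xs(2) tendsto_const]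
    by (auto simp: convergent_def Bseq_def)
  obtain D where "\<And>n. norm (ts n) \<le> D"
    using convergent_imp_Bseq[of ts] ts(2) by (auto simp: convergent_def Bseq_def)
  then have D: "ts n \<le> D" for n using abs_le_D1 by (metis real_norm_def)
  have "\<forall>\<^sub>F n in sequentially. ybar g h k (ts n) (xs n) \<in> cball y0 (max 1 ((C + real k * D) / \<mu>))"
    using eventually_in_strict_feas[OF xs(2) y0]
  proof (rule eventually_mono)
    fix n assume "y0 \<in> strict_feas (xs n)"
    then have "y0 \<in> feas h k (xs n)" by (auto simp: strict_feas_def feas_def less_imp_le)
    from ybar_dist_le[OF xs(1) ts(1) this]
    have "norm (ybar g h k (ts n) (xs n) - y0) \<le> max 1 ((norm (grad_y g (xs n) y0) + real k * ts n) / \<mu>)" .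
    also have "\<dots> \<le> max 1 ((C + real k * D) / \<mu>)"
      using C[of n] D[of n] \<mu>_pos by (intro max.mono divide_right_mono add_mono mult_left_mono) auto
    finally show "ybar g h k (ts n) (xs n) \<in> cball y0 (max 1 ((C + real k * D) / \<mu>))"
      by (simp add: dist_norm norm_minus_commute)
  qed
  then show ?thesis by blast
qed

lemma ybar_subseq_tendsto_ystar:
  assumes xs: "\<And>n. xs n \<in> X" "xs \<longlonglongrightarrow> x0" and x0: "x0 \<in> X"
    and ts: "\<And>n. ts n > 0" "ts \<longlonglongrightarrow> 0"
  shows "\<exists>r. strict_mono r \<and> (\<lambda>n. ybar g h k (ts (r n)) (xs (r n))) \<longlonglongrightarrow> ystar g h k x0"
proof -
  obtain y0 where "y0 \<in> strict_feas x0" using slater[OF x0] by (auto simp: strict_feas_def)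
  then obtain R where "\<forall>\<^sub>F n in sequentially. ybar g h k (ts n) (xs n) \<in> cball y0 R"
    using ybar_eventually_bounded[OF xs ts] by blast
  then obtain r l where r: "strict_mono r"
    and lim: "((\<lambda>n. ybar g h k (ts n) (xs n)) \<circ> r) \<longlonglongrightarrow> l"
    using eventually_in_compact_convergent_subseq[OF compact_cball] by metis
  have "ystar g h k x0 = l"
    using ybar_limit_eq_ystar[of "xs \<circ> r" x0 "ts \<circ> r" l] xs ts x0 lim
      LIMSEQ_subseq_LIMSEQ[OF xs(2) r] LIMSEQ_subseq_LIMSEQ[OF ts(2) r]
    by (simp add: o_def)
  then show ?thesis using r lim by (auto simp: o_def)
qed

abbreviation barrier_mult :: "real \<Rightarrow> 'x \<Rightarrow> nat \<Rightarrow> real" where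
  "barrier_mult t x i \<equiv> t / - h i x (ybar g h k t x)"

lemma barrier_mult_nonneg: "x \<in> X \<Longrightarrow> t > 0 \<Longrightarrow> i < k \<Longrightarrow> 0 \<le> barrier_mult t x i"
  using h_ybar_neg[of x t i] by (intro divide_nonneg_pos) auto

lemma KKT_mult_unique:
  assumes x: "x \<in> X" and l1: "is_KKT_mult g h k x l1" and l2: "is_KKT_mult g h k x l2"
  shows "l1 = l2"
proof (rule ext)
  fix i
  define y where "y = ystar g h k x"
  define A where "A = {i. i < k \<and> h i x y = 0}"
  have inactive: "l1 i = l2 i" if "i < k" "i \<notin> A" for i
  proof -
    have "h i x y \<noteq> 0" using that unfolding A_def by simp
    moreover have "l1 i * h i x y = 0" "l2 i * h i x y = 0"
      using l1 l2 that(1) unfolding is_KKT_mult_def y_def by auto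
    ultimately show ?thesis by simp
  qed
  have "(\<Sum>i\<in>A. (l1 i - l2 i) *\<^sub>R grad_y (h i) x y) = (\<Sum>i<k. (l1 i - l2 i) *\<^sub>R grad_y (h i) x y)"
    using inactive by (intro sum.mono_neutral_left) (auto simp: A_def)
  also have "\<dots> = (grad_y g x y + (\<Sum>i<k. l1 i *\<^sub>R grad_y (h i) x y))
      - (grad_y g x y + (\<Sum>i<k. l2 i *\<^sub>R grad_y (h i) x y))"
    by (simp add: scaleR_diff_left sum_subtractf)
  also have "\<dots> = 0" using l1 l2 unfolding is_KKT_mult_def y_def by simp
  finally have "\<forall>i\<in>A. l1 i - l2 i = 0"
    unfolding A_def y_def by (rule licq[OF x])
  then show "l1 i = l2 i"
    using inactive l1 l2 unfolding is_KKT_mult_def A_def by (cases "i < k") auto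
qed

lemma lambda_eqI: "x \<in> X \<Longrightarrow> is_KKT_mult g h k x lam \<Longrightarrow> lambda g h k x = lam"
  unfolding lambda_def using KKT_mult_unique by (intro the_equality) blast+

lemma barrier_mult_tendsto_0_if_inactive:
  assumes xs: "xs \<longlonglongrightarrow> x0" and ts: "ts \<longlonglongrightarrow> 0"
    and y: "(\<lambda>n. ybar g h k (ts n) (xs n)) \<longlonglongrightarrow> y" and i: "i < k" "h i x0 y < 0"
  shows "(\<lambda>n. barrier_mult (ts n) (xs n) i) \<longlonglongrightarrow> 0"
proof -
  have "(\<lambda>n. h i (xs n) (ybar g h k (ts n) (xs n))) \<longlonglongrightarrow> h i x0 y"
    by (rule tendsto_case_prod_continuous[OF h_cont[OF i(1)] xs y])
  then have "(\<lambda>n. barrier_mult (ts n) (xs n) i) \<longlonglongrightarrow> 0 / - h i x0 y"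
    using ts i(2) by (intro tendsto_intros) auto
  then show ?thesis by simp
qed

lemma barrier_mult_subseq_tendsto_KKT_mult:
  assumes xs: "\<And>n. xs n \<in> X" "xs \<longlonglongrightarrow> x0" and x0: "x0 \<in> X"
    and ts: "\<And>n. ts n > 0" "ts \<longlonglongrightarrow> 0"
    and y: "(\<lambda>n. ybar g h k (ts n) (xs n)) \<longlonglongrightarrow> ystar g h k x0"
  shows "\<exists>r lam. strict_mono r \<and> (\<forall>i<k. (\<lambda>n. barrier_mult (ts (r n)) (xs (r n)) i) \<longlonglongrightarrow> lam i)
    \<and> is_KKT_mult g h k x0 lam"
proof -
  define ys where "ys = ystar g h k x0"
  define A where "A = {i. i < k \<and> h i x0 ys = 0}"
  have y_lim: "(\<lambda>n. ybar g h k (ts n) (xs n)) \<longlonglongrightarrow> ys" using y unfolding ys_def .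
  have "\<exists>r l. strict_mono r \<and> (\<forall>i<k. (\<lambda>n. barrier_mult (ts (r n)) (xs (r n)) i) \<longlonglongrightarrow> l i)
      \<and> (\<forall>i<k. 0 \<le> l i) \<and> (\<forall>i<k. i \<notin> A \<longrightarrow> l i = 0)
      \<and> grad_y g x0 ys + (\<Sum>i<k. l i *\<^sub>R grad_y (h i) x0 ys) = 0"
  proof (rule nonneg_multipliers_convergent_subseq[where a = "\<lambda>n. grad_y g (xs n) (ybar g h k (ts n) (xs n))"
        and b = "\<lambda>n i. grad_y (h i) (xs n) (ybar g h k (ts n) (xs n))"
        and m = "\<lambda>n i. barrier_mult (ts n) (xs n) i"])
    show "(\<lambda>n. grad_y g (xs n) (ybar g h k (ts n) (xs n))) \<longlonglongrightarrow> grad_y g x0 ys"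
      by (rule tendsto_case_prod_continuous[OF grad_g_cont xs(2) y_lim])
    show "(\<lambda>n. grad_y (h i) (xs n) (ybar g h k (ts n) (xs n))) \<longlonglongrightarrow> grad_y (h i) x0 ys" if "i < k" for i
      by (rule tendsto_case_prod_continuous[OF grad_h_cont[OF that] xs(2) y_lim])
    show "0 \<le> barrier_mult (ts n) (xs n) i" if "i < k" for n i
      by (rule barrier_mult_nonneg[OF xs(1) ts(1) that])
    show "grad_y g (xs n) (ybar g h k (ts n) (xs n))
        + (\<Sum>i<k. barrier_mult (ts n) (xs n) i *\<^sub>R grad_y (h i) (xs n) (ybar g h k (ts n) (xs n))) = 0"
      for n by (rule barrier_stationary[OF xs(1) ts(1)])
    show "(\<lambda>n. barrier_mult (ts n) (xs n) i) \<longlonglongrightarrow> 0" if i: "i < k" "i \<notin> A" for i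
    proof (rule barrier_mult_tendsto_0_if_inactive[OF xs(2) ts(2) y_lim i(1)])
      show "h i x0 ys < 0"
        using ybar_limit_feasible[OF xs ts(1) y_lim] i unfolding A_def feas_def by force
    qed
    show "\<forall>i\<in>A. c i = 0" if "(\<Sum>i\<in>A. c i *\<^sub>R grad_y (h i) x0 ys) = 0" for c
      using licq[OF x0, of c] that unfolding A_def ys_def by blast
  qed (auto simp: A_def)
  then obtain r l where r: "strict_mono r"
    and l: "\<forall>i<k. (\<lambda>n. barrier_mult (ts (r n)) (xs (r n)) i) \<longlonglongrightarrow> l i"
    and l_KKT: "\<forall>i<k. 0 \<le> l i" "\<forall>i<k. i \<notin> A \<longrightarrow> l i = 0"
      "grad_y g x0 ys + (\<Sum>i<k. l i *\<^sub>R grad_y (h i) x0 ys) = 0"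
    by blast
  define lam where "lam i = (if i < k then l i else 0)" for i
  have "is_KKT_mult g h k x0 lam"
    unfolding is_KKT_mult_def ys_def[symmetric] using l_KKT by (auto simp: lam_def A_def)
  moreover have "\<forall>i<k. (\<lambda>n. barrier_mult (ts (r n)) (xs (r n)) i) \<longlonglongrightarrow> lam i"
    using l by (simp add: lam_def)
  ultimately show ?thesis using r by blast
qed

lemma barrier_mult_subseq_tendsto_lambda:
  assumes xs: "\<And>n. xs n \<in> X" "xs \<longlonglongrightarrow> x0" and x0: "x0 \<in> X"
    and ts: "\<And>n. ts n > 0" "ts \<longlonglongrightarrow> 0"
  shows "\<exists>r. strict_mono r \<and> (\<forall>i<k. (\<lambda>n. barrier_mult (ts (r n)) (xs (r n)) i) \<longlonglongrightarrow> lambda g h k x0 i)"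
proof -
  obtain r1 where r1: "strict_mono r1"
    and y: "(\<lambda>n. ybar g h k (ts (r1 n)) (xs (r1 n))) \<longlonglongrightarrow> ystar g h k x0"
    using ybar_subseq_tendsto_ystar[OF xs x0 ts] by blast
  have "\<exists>r lam. strict_mono r
      \<and> (\<forall>i<k. (\<lambda>n. barrier_mult (ts (r1 (r n))) (xs (r1 (r n))) i) \<longlonglongrightarrow> lam i)
      \<and> is_KKT_mult g h k x0 lam"
    using barrier_mult_subseq_tendsto_KKT_mult[of "xs \<circ> r1" x0 "ts \<circ> r1"] xs ts x0 y
      LIMSEQ_subseq_LIMSEQ[OF xs(2) r1] LIMSEQ_subseq_LIMSEQ[OF ts(2) r1]
    by (simp add: o_def)
  then obtain r2 lam where r2: "strict_mono r2"
    and lim: "\<forall>i<k. (\<lambda>n. barrier_mult (ts (r1 (r2 n))) (xs (r1 (r2 n))) i) \<longlonglongrightarrow> lam i"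
    and "is_KKT_mult g h k x0 lam"
    by blast
  then have "lambda g h k x0 = lam" by (intro lambda_eqI x0)
  then show ?thesis using strict_mono_o[OF r1 r2] lim by (auto simp: o_def)
qed

lemma exists_barrier_mult_near_lambda:
  assumes x: "x \<in> X" and i: "i < k" and \<delta>: "\<delta> > 0" and T: "T > 0"
  shows "\<exists>t. 0 < t \<and> t \<le> T \<and> \<bar>barrier_mult t x i - lambda g h k x i\<bar> < \<delta>"
proof -
  define ts where "ts n = inverse (real (Suc n))" for n
  have ts: "\<And>n. ts n > 0" "ts \<longlonglongrightarrow> 0"
    unfolding ts_def by (simp, rule LIMSEQ_inverse_real_of_nat)
  obtain r where r: "strict_mono r"
    and lim: "(\<lambda>n. barrier_mult (ts (r n)) x i) \<longlonglongrightarrow> lambda g h k x i"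
    using barrier_mult_subseq_tendsto_lambda[OF x tendsto_const x ts] i by blast
  have "\<forall>\<^sub>F n in sequentially. \<bar>barrier_mult (ts (r n)) x i - lambda g h k x i\<bar> < \<delta>"
    using lim \<delta> unfolding tendsto_iff dist_real_def by blast
  moreover have "\<forall>\<^sub>F n in sequentially. ts (r n) < T"
    using LIMSEQ_subseq_LIMSEQ[OF ts(2) r] T by (auto simp: o_def intro: order_tendstoD)
  ultimately obtain n where "\<bar>barrier_mult (ts (r n)) x i - lambda g h k x i\<bar> < \<delta>" "ts (r n) < T"
    using eventually_happens'[OF trivial_limit_sequentially] eventually_conj by blast
  then show ?thesis using ts(1)[of "r n"] by (intro exI[of _ "ts (r n)"]) auto
qed

lemma lambda_subseq_tendsto:
  assumes xs: "\<And>n. xs n \<in> X" "xs \<longlonglongrightarrow> x0" and x0: "x0 \<in> X" and i: "i < k"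
  shows "\<exists>r. strict_mono r \<and> (\<lambda>n. lambda g h k (xs (r n)) i) \<longlonglongrightarrow> lambda g h k x0 i"
proof -
  \<comment> \<open>approximate \<open>lambda g h k (xs n) i\<close> by barrier multipliers at parameters \<open>ts n \<longrightarrow> 0\<close>\<close>
  have "\<forall>n. \<exists>t. 0 < t \<and> t \<le> inverse (real (Suc n))
      \<and> \<bar>barrier_mult t (xs n) i - lambda g h k (xs n) i\<bar> < inverse (real (Suc n))"
    using exists_barrier_mult_near_lambda[OF xs(1) i] by simp
  then obtain ts where ts_pos: "\<And>n. 0 < ts n" and ts_le: "\<And>n. ts n \<le> inverse (real (Suc n))"
    and close: "\<And>n. \<bar>barrier_mult (ts n) (xs n) i - lambda g h k (xs n) i\<bar> < inverse (real (Suc n))"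
    by metis
  have ts_lim: "ts \<longlonglongrightarrow> 0"
    by (rule LIMSEQ_zero_if_le_inverse_Suc[OF less_imp_le[OF ts_pos] ts_le])
  obtain r where r: "strict_mono r"
    and lim: "(\<lambda>n. barrier_mult (ts (r n)) (xs (r n)) i) \<longlonglongrightarrow> lambda g h k x0 i"
    using barrier_mult_subseq_tendsto_lambda[where ts = ts, OF xs x0 ts_pos ts_lim] i by blast
  have "(\<lambda>n. barrier_mult (ts (r n)) (xs (r n)) i - lambda g h k (xs (r n)) i) \<longlonglongrightarrow> 0"
  proof (rule Lim_null_comparison[OF always_eventually LIMSEQ_inverse_real_of_nat], intro allI)
    fix n
    have "inverse (real (Suc (r n))) \<le> inverse (real (Suc n))"
      using seq_suble[OF r, of n] by (simp add: le_imp_inverse_le)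
    then show "norm (barrier_mult (ts (r n)) (xs (r n)) i - lambda g h k (xs (r n)) i)
        \<le> inverse (real (Suc n))"
      using close[of "r n"] unfolding real_norm_def by linarith
  qed
  from tendsto_diff[OF lim this] show ?thesis using r by auto
qed

lemma barrier_mult_uniform_tendsto_lambda:
  assumes i: "i < k" and \<epsilon>: "\<epsilon> > 0"
  shows "\<exists>T>0. \<forall>x\<in>X. \<forall>t. 0 < t \<and> t \<le> T \<longrightarrow> \<bar>lambda g h k x i - barrier_mult t x i\<bar> \<le> \<epsilon>"
proof (rule ccontr)
  assume "\<not> ?thesis"
  then have "\<forall>n. \<exists>x t. x \<in> X \<and> 0 < t \<and> t \<le> inverse (real (Suc n))
      \<and> \<epsilon> < \<bar>lambda g h k x i - barrier_mult t x i\<bar>"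
    by (metis inverse_positive_iff_positive of_nat_0_less_iff zero_less_Suc not_le)
  then obtain xs ts where xs: "\<And>n. xs n \<in> X" and ts_pos: "\<And>n. 0 < ts n"
    and ts_le: "\<And>n. ts n \<le> inverse (real (Suc n))"
    and far: "\<And>n. \<epsilon> < \<bar>lambda g h k (xs n) i - barrier_mult (ts n) (xs n) i\<bar>"
    by metis
  have ts: "ts \<longlonglongrightarrow> 0"
    by (rule LIMSEQ_zero_if_le_inverse_Suc[OF less_imp_le[OF ts_pos] ts_le])
  obtain x0 r1 where x0: "x0 \<in> X" and r1: "strict_mono r1" and x_lim: "(xs \<circ> r1) \<longlonglongrightarrow> x0"
    using seq_compactE[OF compact_imp_seq_compact[OF compact_X]] xs by metis
  obtain r2 where r2: "strict_mono r2"
    and mult_lim: "(\<lambda>n. barrier_mult (ts (r1 (r2 n))) (xs (r1 (r2 n))) i) \<longlonglongrightarrow> lambda g h k x0 i"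
    using barrier_mult_subseq_tendsto_lambda[of "xs \<circ> r1" x0 "ts \<circ> r1"] xs x_lim x0 ts_pos
      LIMSEQ_subseq_LIMSEQ[OF ts r1] i
    by (auto simp: o_def)
  obtain r3 where r3: "strict_mono r3"
    and lambda_lim: "(\<lambda>n. lambda g h k (xs (r1 (r2 (r3 n)))) i) \<longlonglongrightarrow> lambda g h k x0 i"
    using lambda_subseq_tendsto[of "xs \<circ> r1 \<circ> r2" x0] xs x0 i LIMSEQ_subseq_LIMSEQ[OF x_lim r2]
    by (auto simp: o_def)
  have "(\<lambda>n. \<bar>lambda g h k (xs (r1 (r2 (r3 n)))) i - barrier_mult (ts (r1 (r2 (r3 n)))) (xs (r1 (r2 (r3 n)))) i\<bar>)
      \<longlonglongrightarrow> \<bar>lambda g h k x0 i - lambda g h k x0 i\<bar>"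
    using lambda_lim LIMSEQ_subseq_LIMSEQ[OF mult_lim r3] by (intro tendsto_intros) (auto simp: o_def)
  then have "\<epsilon> \<le> 0"
    using far less_imp_le by (intro LIMSEQ_le_const[where x = 0]) auto
  then show False using \<epsilon> by simp
qed

end

theorem lemma15:
  fixes f g :: "real^'n \<Rightarrow> real^'m \<Rightarrow> real"
    and h :: "nat \<Rightarrow> real^'n \<Rightarrow> real^'m \<Rightarrow> real"
    and k :: nat and X :: "(real^'n) set" and \<mu>g :: real
  assumes A1: "C1_fun (case_prod f)" "C2_fun (case_prod g)" "\<forall>i<k. C2_fun (case_prod (h i))"
    and A2: "convex X" "compact X" "\<forall>x\<in>X. \<exists>y. \<forall>i<k. h i x y < 0"
    and A3: "\<forall>x\<in>X. \<forall>c::nat \<Rightarrow> real.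
               (\<Sum>i\<in>{i. i < k \<and> h i x (ystar g h k x) = 0}. c i *\<^sub>R grad_y (h i) x (ystar g h k x)) = 0
               \<longrightarrow> (\<forall>i\<in>{i. i < k \<and> h i x (ystar g h k x) = 0}. c i = 0)"
    and SC: "\<mu>g > 0" "\<forall>x\<in>X. strongly_convex_on UNIV \<mu>g (g x)"
            "\<forall>x\<in>X. \<forall>i<k. convex_on UNIV (h i x)"
  shows "\<forall>i<k. \<forall>\<epsilon>>0. \<exists>T>0. \<forall>x\<in>X. \<forall>t. 0 < t \<and> t \<le> T \<longrightarrow>
           \<bar>lambda g h k x i - t / (- h i x (ybar g h k t x))\<bar> \<le> \<epsilon>"
proof -
  note g = C1_fun_grad_y[OF C2_fun_imp_C1_fun[OF A1(2)]]
  note h = C1_fun_grad_y[OF C2_fun_imp_C1_fun[OF A1(3)[rule_format]]]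
  interpret log_barrier g h k X \<mu>g
  proof
    show "continuous_on UNIV (case_prod g)" "continuous_on UNIV (case_prod (grad_y g))"
      "(g x has_derivative (\<lambda>w. grad_y g x y \<bullet> w)) (at y)" for x y
      by (fact g)+
    show "continuous_on UNIV (case_prod (h i))" "continuous_on UNIV (case_prod (grad_y (h i)))"
      "(h i x has_derivative (\<lambda>w. grad_y (h i) x y \<bullet> w)) (at y)" if "i < k" for i x y
      using h[OF that] by blast+
  qed (use A2 A3 SC in auto)
  show ?thesis using barrier_mult_uniform_tendsto_lambda by blast
qed

end
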